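(* Let $K$ be a field, $R = K[[Y,Z,W]]$, and let $P$ be the kernel of the $K$-algebra homomorphism $\phi: K[[Y,Z,W]]\to K[[T]]$ with $\phi(W)=T^3$, $\phi(Y)=T^4$, $\phi(Z)=T^5$; thus $P = (W^3-YZ,\ Y^2-WZ,\ Z^2-W^2Y)$. Then $P$ is a G-ideal of $R$, $P^2$ is not $P$-primary, and consequently there exists a maximal ideal $M$ of $R[X]$ with $M\cap R = P$ that is not power stable.
   Context: A prime ideal $P$ of a ring $R$ is a G-ideal if the fraction field of $R/P$ is finitely generated as an algebra over $R/P$. An ideal $I$ of the polynomial ring $R[X]$ over an integral domain $R$ is called power stable if $I^t\cap R = (I\cap R)^t$ for all integers $t\geq 1$. *)

theory Defs
  imports "HOL-Computational_Algebra.Computational_Algebra"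
begin

definition is_ideal :: "'r::comm_ring_1 set \<Rightarrow> bool" where
  "is_ideal I \<longleftrightarrow> 0 \<in> I \<and> (\<forall>x\<in>I. \<forall>y\<in>I. x + y \<in> I) \<and> (\<forall>r. \<forall>x\<in>I. r * x \<in> I)"

definition prime_ideal :: "'r::comm_ring_1 set \<Rightarrow> bool" where
  "prime_ideal P \<longleftrightarrow> is_ideal P \<and> P \<noteq> UNIV \<and> (\<forall>a b. a * b \<in> P \<longrightarrow> a \<in> P \<or> b \<in> P)"

definition maximal_ideal :: "'r::comm_ring_1 set \<Rightarrow> bool" where
  "maximal_ideal M \<longleftrightarrow> is_ideal M \<and> M \<noteq> UNIV \<and>
     (\<forall>J. is_ideal J \<and> M \<subseteq> J \<longrightarrow> J = M \<or> J = UNIV)"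

definition ideal_gen :: "'r::comm_ring_1 set \<Rightarrow> 'r set" where
  "ideal_gen S = \<Inter> {I. is_ideal I \<and> S \<subseteq> I}"

definition ideal_mult :: "'r::comm_ring_1 set \<Rightarrow> 'r set \<Rightarrow> 'r set" where
  "ideal_mult I J = ideal_gen {x * y | x y. x \<in> I \<and> y \<in> J}"

fun ideal_pow :: "'r::comm_ring_1 set \<Rightarrow> nat \<Rightarrow> 'r set" where
  "ideal_pow I 0 = UNIV"
| "ideal_pow I (Suc n) = ideal_mult I (ideal_pow I n)"

definition ideal_radical :: "'r::comm_ring_1 set \<Rightarrow> 'r set" where
  "ideal_radical I = {x. \<exists>n. x ^ n \<in> I}"

definition primary_ideal :: "'r::comm_ring_1 set \<Rightarrow> bool" where
  "primary_ideal Q \<longleftrightarrow> is_ideal Q \<and> Q \<noteq> UNIV \<and>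
     (\<forall>x y. x * y \<in> Q \<and> x \<notin> Q \<longrightarrow> (\<exists>n. y ^ n \<in> Q))"

definition P_primary :: "'r::comm_ring_1 set \<Rightarrow> 'r set \<Rightarrow> bool" where
  "P_primary P Q \<longleftrightarrow> primary_ideal Q \<and> ideal_radical Q = P"

text \<open>Elements of Frac(R/P) are represented by pairs (a,b) with b \<notin> P,
  (a,b) ~ (c,d) iff a*d - c*b \<in> P.\<close>
definition frac_reps :: "'r::comm_ring_1 set \<Rightarrow> ('r \<times> 'r) set" where
  "frac_reps P = {(a, b). b \<notin> P}"

definition frac_eq :: "'r::comm_ring_1 set \<Rightarrow> 'r \<times> 'r \<Rightarrow> 'r \<times> 'r \<Rightarrow> bool" where
  "frac_eq P x y \<longleftrightarrow> fst x * snd y - fst y * snd x \<in> P"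

text \<open>Representatives of the R/P-subalgebra of Frac(R/P) generated by S.\<close>
inductive_set frac_alg_gen :: "('r::comm_ring_1 \<times> 'r) set \<Rightarrow> ('r \<times> 'r) set"
  for S :: "('r \<times> 'r) set" where
  base: "(r, 1) \<in> frac_alg_gen S"
| gen: "g \<in> S \<Longrightarrow> g \<in> frac_alg_gen S"
| add: "(a, b) \<in> frac_alg_gen S \<Longrightarrow> (c, d) \<in> frac_alg_gen S \<Longrightarrow> (a * d + c * b, b * d) \<in> frac_alg_gen S"
| mult: "(a, b) \<in> frac_alg_gen S \<Longrightarrow> (c, d) \<in> frac_alg_gen S \<Longrightarrow> (a * c, b * d) \<in> frac_alg_gen S"

definition G_ideal :: "'r::comm_ring_1 set \<Rightarrow> bool" where
  "G_ideal P \<longleftrightarrow> prime_ideal P \<and>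
     (\<exists>S. finite S \<and> S \<subseteq> frac_reps P \<and>
        (\<forall>x\<in>frac_reps P. \<exists>y\<in>frac_alg_gen S. frac_eq P x y))"

definition contract :: "'r::comm_ring_1 poly set \<Rightarrow> 'r set" where
  "contract I = {r. [:r:] \<in> I}"

definition power_stable :: "'r::comm_ring_1 poly set \<Rightarrow> bool" where
  "power_stable I \<longleftrightarrow> (\<forall>t\<ge>1. contract (ideal_pow I t) = ideal_pow (contract I) t)"

text \<open>K[[Y,Z,W]] is modelled as the iterated power series ring ((K[[Y]])[[Z]])[[W]].
  The coefficient of Y^a Z^b W^c in f is coeff3 f a b c.\<close>
type_synonym 'k ps3 = "'k fps fps fps"

definition coeff3 :: "'k::comm_ring_1 ps3 \<Rightarrow> nat \<Rightarrow> nat \<Rightarrow> nat \<Rightarrow> 'k" where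
  "coeff3 f a b c = fps_nth (fps_nth (fps_nth f c) b) a"

definition var_Y :: "'k::comm_ring_1 ps3" where "var_Y = fps_const (fps_const fps_X)"
definition var_Z :: "'k::comm_ring_1 ps3" where "var_Z = fps_const fps_X"
definition var_W :: "'k::comm_ring_1 ps3" where "var_W = fps_X"

text \<open>The K-algebra homomorphism Y \<mapsto> T^4, Z \<mapsto> T^5, W \<mapsto> T^3 (substitution).\<close>
definition phi :: "'k::comm_ring_1 ps3 \<Rightarrow> 'k fps" where
  "phi f = Abs_fps (\<lambda>n. \<Sum>(a, b, c) \<in> {(a, b, c). 4 * a + 5 * b + 3 * c = n}. coeff3 f a b c)"

end

theory Submission
  imports Defs
begin

text \<open>
  Give \<open>Y^a Z^b W^c\<close> the weight \<open>4a + 5b + 3c\<close>; then \<open>\<phi>\<close> sums the coefficients of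
  each (finite) weight slice.  The rewriting rules \<open>Y\<^sup>2 \<rightarrow> WZ\<close>, \<open>YZ \<rightarrow> W\<^sup>3\<close>, \<open>Z\<^sup>2 \<rightarrow> YW\<^sup>2\<close> reduce
  every monomial, modulo \<open>(g1, g2, g3)\<close>, to the unique normal monomial \<open>W^k, YW^k, ZW^k\<close> of its
  weight; gluing these reductions weight by weight shows \<open>P = (g1, g2, g3)\<close>.  The normal
  monomials also show that \<open>\<phi>\<close> hits every series without \<open>T\<close>- and \<open>T\<^sup>2\<close>-terms, so
  \<open>Frac(R/P) = (R/P)[1/W]\<close> and \<open>P\<close> is a G-ideal.  The element
  \<open>h = W\<^sup>5 - 3YZW\<^sup>2 + Y\<^sup>3W + Z\<^sup>3\<close> has order \<open>3\<close>, hence \<open>h \<notin> P\<^sup>2\<close> (which has order \<open>\<ge> 4\<close>),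
  while \<open>Wh = g1\<^sup>2 - g2 g3 \<in> P\<^sup>2\<close>: so \<open>P\<^sup>2\<close> is not primary.  Finally
  \<open>\<psi> : R[X] \<rightarrow> K((T))\<close>, \<open>X \<mapsto> T\<^sup>-\<^sup>3\<close>, is onto a field, its kernel \<open>M\<close> is maximal with
  \<open>M \<inter> R = P\<close>, and \<open>h = h(1 - WX) + X\<cdot>Wh \<in> M\<^sup>2\<close>, so \<open>M\<^sup>2 \<inter> R \<noteq> P\<^sup>2\<close>.
\<close>

definition is_ring_hom :: "('a::comm_ring_1 \<Rightarrow> 'b::comm_ring_1) \<Rightarrow> bool" where
  "is_ring_hom h \<longleftrightarrow> (\<forall>x y. h (x + y) = h x + h y) \<and> (\<forall>x y. h (x * y) = h x * h y) \<and> h 1 = 1"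

lemma ring_hom_add: "is_ring_hom h \<Longrightarrow> h (x + y) = h x + h y"
  and ring_hom_mult: "is_ring_hom h \<Longrightarrow> h (x * y) = h x * h y"
  and ring_hom_one: "is_ring_hom h \<Longrightarrow> h 1 = 1"
  unfolding is_ring_hom_def by auto

lemma ring_hom_zero: "is_ring_hom h \<Longrightarrow> h 0 = 0"
  using ring_hom_add[of h 0 0] by simp

lemma ring_hom_diff: "is_ring_hom h \<Longrightarrow> h (x - y) = h x - h y"
  using ring_hom_add[of h "x - y" y] by (simp add: algebra_simps)

lemma ring_hom_power: "is_ring_hom h \<Longrightarrow> h (x ^ n) = h x ^ n"
  by (induction n) (simp_all add: ring_hom_one ring_hom_mult)

lemma ring_hom_comp: "is_ring_hom g \<Longrightarrow> is_ring_hom h \<Longrightarrow> is_ring_hom (g \<circ> h)"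
  unfolding is_ring_hom_def by simp

lemma is_idealD:
  assumes "is_ideal I"
  shows ideal_add: "x \<in> I \<Longrightarrow> y \<in> I \<Longrightarrow> x + y \<in> I"
    and ideal_mult_left: "x \<in> I \<Longrightarrow> r * x \<in> I"
    and ideal_mult_right: "x \<in> I \<Longrightarrow> x * r \<in> I"
  using assms unfolding is_ideal_def by (auto simp: mult.commute)

lemma ideal_diff: "is_ideal I \<Longrightarrow> x \<in> I \<Longrightarrow> y \<in> I \<Longrightarrow> x - y \<in> I"
  using ideal_add[of I x "- y"] ideal_mult_left[of I y "- 1"] by simp

lemma ideal_gen_is_ideal: "is_ideal (ideal_gen S)"
  and ideal_gen_superset: "S \<subseteq> ideal_gen S"
  and ideal_gen_least: "is_ideal I \<Longrightarrow> S \<subseteq> I \<Longrightarrow> ideal_gen S \<subseteq> I"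
  unfolding is_ideal_def ideal_gen_def by auto

lemma ideal_mult_mem: "x \<in> I \<Longrightarrow> y \<in> J \<Longrightarrow> x * y \<in> ideal_mult I J"
  unfolding ideal_mult_def by (rule subsetD[OF ideal_gen_superset]) blast

lemma is_ideal_ideal_pow: "is_ideal (ideal_pow I n)"
proof (cases n)
  case 0 then show ?thesis by (simp add: is_ideal_def)
qed (simp add: ideal_mult_def ideal_gen_is_ideal)

lemma ideal_pow_subset:
  assumes I: "is_ideal I" and n: "0 < n"
  shows "ideal_pow I n \<subseteq> I"
proof -
  obtain m where m: "n = Suc m" using n by (cases n) auto
  show ?thesis
    unfolding m ideal_pow.simps ideal_mult_def
    by (intro ideal_gen_least[OF I]) (auto intro: ideal_mult_right[OF I])
qed

lemma ideal_pow_two_mem: "x \<in> I \<Longrightarrow> y \<in> I \<Longrightarrow> x * y \<in> ideal_pow I 2"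
  using ideal_mult_mem[of x I "y * 1" "ideal_mult I UNIV"] ideal_mult_mem[of y I 1 UNIV]
  by (simp add: numeral_2_eq_2)

lemma kernel_is_ideal: "is_ring_hom h \<Longrightarrow> is_ideal {x. h x = 0}"
  unfolding is_ideal_def by (simp add: ring_hom_zero ring_hom_add ring_hom_mult)

lemma kernel_prime_ideal:
  fixes h :: "'a::comm_ring_1 \<Rightarrow> 'b::idom"
  assumes "is_ring_hom h"
  shows "prime_ideal {x. h x = 0}"
proof -
  have "1 \<notin> {x. h x = 0}" using ring_hom_one[OF assms] by simp
  then show ?thesis
    unfolding prime_ideal_def using kernel_is_ideal[OF assms] ring_hom_mult[OF assms] by auto
qed

lemma kernel_maximal_ideal:
  fixes h :: "'a::comm_ring_1 \<Rightarrow> 'b::field"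
  assumes hom: "is_ring_hom h" and onto: "surj h"
  shows "maximal_ideal {x. h x = 0}"
  unfolding maximal_ideal_def
proof (intro conjI allI impI)
  let ?M = "{x. h x = 0}"
  show "is_ideal ?M" by (rule kernel_is_ideal[OF hom])
  show "?M \<noteq> UNIV" using ring_hom_one[OF hom] by (metis UNIV_I mem_Collect_eq one_neq_zero)
  fix J assume J: "is_ideal J \<and> ?M \<subseteq> J"
  show "J = ?M \<or> J = UNIV"
  proof (cases "J \<subseteq> ?M")
    case False
    then obtain x where x: "x \<in> J" "h x \<noteq> 0" by blast
    obtain y where y: "h y = inverse (h x)" using onto by (metis surjD)
    have "x * y - 1 \<in> ?M" using x y by (simp add: ring_hom_diff[OF hom] ring_hom_mult[OF hom] ring_hom_one[OF hom])
    then have "x * y - (x * y - 1) \<in> J" using J x ideal_diff ideal_mult_right by blast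
    then have "1 \<in> J" by simp
    then have "J = UNIV" using J ideal_mult_right[of J 1] by auto
    then show ?thesis ..
  qed (use J in auto)
qed

lemma not_primary_by_witness:
  assumes "x * y \<in> Q" "x \<notin> Q" "\<And>n. y ^ n \<notin> Q"
  shows "\<not> primary_ideal Q"
  using assms unfolding primary_ideal_def by blast

text \<open>If every fraction of \<open>R/P\<close> can be written with a power of a fixed \<open>w \<notin> P\<close> as
  denominator, then \<open>Frac(R/P) = (R/P)[1/w]\<close> and \<open>P\<close> is a G-ideal.\<close>
lemma G_ideal_by_one_denominator:
  assumes P: "prime_ideal P" and w: "w \<notin> P"
    and denom: "\<And>a b. b \<notin> P \<Longrightarrow> \<exists>r k. a * w ^ k - r * b \<in> P"
  shows "G_ideal P"
proof -
  have pow: "(r, w ^ k) \<in> frac_alg_gen {(1, w)}" for r k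
  proof (induction k arbitrary: r)
    case (Suc k)
    have "(r * 1, w ^ k * w) \<in> frac_alg_gen {(1, w)}"
      by (rule frac_alg_gen.mult[OF Suc.IH frac_alg_gen.gen]) simp
    then show ?case by (simp add: mult.commute)
  qed (simp add: frac_alg_gen.base)
  have "\<exists>y\<in>frac_alg_gen {(1, w)}. frac_eq P x y" if "x \<in> frac_reps P" for x
  proof -
    obtain a b where x: "x = (a, b)" by (cases x)
    have b: "b \<notin> P" using that x by (simp add: frac_reps_def)
    obtain r k where "a * w ^ k - r * b \<in> P" using denom[OF b] by blast
    then have "frac_eq P x (r, w ^ k)" by (simp add: frac_eq_def x)
    then show ?thesis using pow by blast
  qed
  then show ?thesis
    unfolding G_ideal_def using P w by (intro conjI exI[of _ "{(1, w)}"]) (auto simp: frac_reps_def)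
qed

lemma not_power_stable_by_square:
  "contract (ideal_pow M 2) \<noteq> ideal_pow (contract M) 2 \<Longrightarrow> \<not> power_stable M"
  unfolding power_stable_def by auto

lemma coeff3_add [simp]: "coeff3 (f + g) a b c = coeff3 f a b c + coeff3 g a b c"
  and coeff3_diff [simp]: "coeff3 (f - g) a b c = coeff3 f a b c - coeff3 g a b c"
  and coeff3_0 [simp]: "coeff3 0 a b c = 0"
  by (simp_all add: coeff3_def)

lemma coeff3_numeral_mult: "coeff3 (numeral k * f) a b c = numeral k * coeff3 f a b c"
  by (simp add: coeff3_def numeral_fps_const)

lemma coeff3_ext: "(\<And>a b c. coeff3 f a b c = coeff3 g a b c) \<Longrightarrow> f = g"
  unfolding coeff3_def by (intro fps_ext) auto

definition mk3 :: "(nat \<Rightarrow> nat \<Rightarrow> nat \<Rightarrow> 'k::comm_ring_1) \<Rightarrow> 'k ps3" where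
  "mk3 F = Abs_fps (\<lambda>c. Abs_fps (\<lambda>b. Abs_fps (\<lambda>a. F a b c)))"

lemma coeff3_mk3 [simp]: "coeff3 (mk3 F) a b c = F a b c"
  by (simp add: mk3_def coeff3_def)

type_synonym exps = "nat \<times> nat \<times> nat"

definition coeff_at :: "'k::comm_ring_1 ps3 \<Rightarrow> exps \<Rightarrow> 'k" where
  "coeff_at f m = (case m of (a, b, c) \<Rightarrow> coeff3 f a b c)"

definition box3 :: "nat \<Rightarrow> nat \<Rightarrow> nat \<Rightarrow> exps set" where
  "box3 a b c = {0..a} \<times> {0..b} \<times> {0..c}"

lemma coeff3_mult: "coeff3 (f * g) a b c =
  (\<Sum>(i, j, k)\<in>box3 a b c. coeff3 f i j k * coeff3 g (a - i) (b - j) (c - k))"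
proof -
  let ?t = "\<lambda>i j k. coeff3 f i j k * coeff3 g (a - i) (b - j) (c - k)"
  have "coeff3 (f * g) a b c = (\<Sum>k=0..c. \<Sum>j=0..b. \<Sum>i=0..a. ?t i j k)"
    unfolding coeff3_def by (simp add: fps_mult_nth fps_sum_nth)
  also have "\<dots> = (\<Sum>k=0..c. \<Sum>i=0..a. \<Sum>j=0..b. ?t i j k)"
    by (rule sum.cong[OF refl], rule sum.swap)
  also have "\<dots> = (\<Sum>i=0..a. \<Sum>k=0..c. \<Sum>j=0..b. ?t i j k)" by (rule sum.swap)
  also have "\<dots> = (\<Sum>i=0..a. \<Sum>j=0..b. \<Sum>k=0..c. ?t i j k)"
    by (rule sum.cong[OF refl], rule sum.swap)
  also have "\<dots> = (\<Sum>(i, j, k)\<in>box3 a b c. ?t i j k)"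
    unfolding box3_def by (simp add: sum.cartesian_product case_prod_beta)
  finally show ?thesis .
qed

definition mon :: "exps \<Rightarrow> 'k::comm_ring_1 ps3" where
  "mon m = (case m of (a, b, c) \<Rightarrow> var_Y ^ a * var_Z ^ b * var_W ^ c)"

lemma coeff3_mon: "coeff3 (mon m :: 'k::comm_ring_1 ps3) a b c = (if m = (a, b, c) then 1 else 0)"
proof -
  obtain x y z where m: "m = (x, y, z)" by (cases m)
  have "(mon m :: 'k ps3) = fps_const (fps_const (fps_X ^ x) * fps_X ^ y) * fps_X ^ z"
    by (simp add: m mon_def var_Y_def var_Z_def var_W_def fps_const_mult[symmetric] del: fps_const_mult)
  then show ?thesis
    unfolding coeff3_def by (auto simp: m fps_X_power_mult_right_nth fps_mult_left_const_nth)
qed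

lemma mon_mult: "mon (a, b, c) * mon (a', b', c') = (mon (a + a', b + b', c + c') :: 'k::comm_ring_1 ps3)"
  by (simp add: mon_def power_add algebra_simps)

section \<open>The weighted substitution \<open>\<phi>\<close>\<close>

definition wt :: "exps \<Rightarrow> nat" where
  "wt m = (case m of (a, b, c) \<Rightarrow> 4 * a + 5 * b + 3 * c)"

definition weight_slice :: "nat \<Rightarrow> exps set" where
  "weight_slice n = {(a, b, c). 4 * a + 5 * b + 3 * c = n}"

lemma mem_weight_slice: "m \<in> weight_slice n \<longleftrightarrow> wt m = n"
  by (cases m) (simp add: weight_slice_def wt_def)

lemma finite_weight_slice [simp]: "finite (weight_slice n)"
proof -
  have "weight_slice n \<subseteq> {0..n} \<times> {0..n} \<times> {0..n}" unfolding weight_slice_def by auto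
  then show ?thesis by (rule finite_subset) auto
qed

lemma phi_nth: "phi f $ n = (\<Sum>m\<in>weight_slice n. coeff_at f m)"
  unfolding phi_def weight_slice_def coeff_at_def by simp

lemma phi_mon: "phi (mon m :: 'k::comm_ring_1 ps3) = fps_X ^ wt m"
proof (rule fps_ext)
  fix n
  have "phi (mon m :: 'k ps3) $ n = (\<Sum>x\<in>weight_slice n. if x = m then 1 else 0)"
    unfolding phi_nth by (rule sum.cong) (auto simp: coeff_at_def coeff3_mon)
  also have "\<dots> = (if wt m = n then 1 else 0)" by (simp add: sum.delta' mem_weight_slice)
  finally show "phi (mon m :: 'k ps3) $ n = (fps_X ^ wt m :: 'k fps) $ n" by simp
qed

text \<open>Additivity and multiplicativity of \<open>\<phi>\<close>: the latter compares both sides as a sum over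
  pairs of exponent triples of total weight \<open>n\<close>.\<close>
lemma phi_add: "phi (f + g) = phi f + phi g"
  by (rule fps_ext) (simp add: phi_nth coeff_at_def case_prod_beta sum.distrib)

definition weight_pairs :: "nat \<Rightarrow> (exps \<times> exps) set" where
  "weight_pairs n = {(m1, m2). wt m1 + wt m2 = n}"

lemma phi_mult: "phi (f * g) = phi f * phi g"
proof (rule fps_ext)
  fix n
  let ?F = "coeff_at f" and ?G = "coeff_at g"
  have "phi (f * g) $ n = (\<Sum>(a, b, c)\<in>weight_slice n. \<Sum>(i, j, k)\<in>box3 a b c.
      coeff3 f i j k * coeff3 g (a - i) (b - j) (c - k))"
    unfolding phi_nth coeff_at_def coeff3_mult by (simp add: case_prod_beta)
  also have "\<dots> = (\<Sum>(m, m1)\<in>Sigma (weight_slice n) (\<lambda>(a, b, c). box3 a b c).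
      (case (m, m1) of ((a, b, c), (i, j, k)) \<Rightarrow> coeff3 f i j k * coeff3 g (a - i) (b - j) (c - k)))"
    by (subst sum.Sigma[symmetric]) (auto simp: box3_def split_def intro!: sum.cong)
  also have "\<dots> = (\<Sum>(m1, m2)\<in>weight_pairs n. ?F m1 * ?G m2)"
    by (rule sum.reindex_bij_witness[where i = "\<lambda>((i, j, k), (i', j', k')). ((i + i', j + j', k + k'), (i, j, k))"
          and j = "\<lambda>((a, b, c), (i, j, k)). ((i, j, k), (a - i, b - j, c - k))"])
      (auto simp: weight_pairs_def weight_slice_def box3_def wt_def coeff_at_def)
  also have "\<dots> = (\<Sum>(p, mm)\<in>Sigma {0..n} (\<lambda>p. weight_slice p \<times> weight_slice (n - p)).
      (case mm of (m1, m2) \<Rightarrow> ?F m1 * ?G m2))"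
    by (rule sum.reindex_bij_witness[where j = "\<lambda>(m1, m2). (wt m1, (m1, m2))" and i = "snd"])
      (auto simp: weight_pairs_def mem_weight_slice)
  also have "\<dots> = (\<Sum>p=0..n. (\<Sum>m1\<in>weight_slice p. ?F m1) * (\<Sum>m2\<in>weight_slice (n - p). ?G m2))"
    by (subst sum.Sigma[symmetric]) (auto simp: split_def sum_product sum.cartesian_product intro!: sum.cong)
  also have "\<dots> = (phi f * phi g) $ n"
    unfolding fps_mult_nth phi_nth by simp
  finally show "phi (f * g) $ n = (phi f * phi g) $ n" .
qed

lemma phi_one: "phi 1 = 1"
  using phi_mon[of "(0, 0, 0)"] by (simp add: mon_def wt_def)

lemma phi_ring_hom: "is_ring_hom phi"
  unfolding is_ring_hom_def by (simp add: phi_add phi_mult phi_one)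

lemma phi_W: "phi var_W = fps_X ^ 3"
  using phi_mon[of "(0, 0, 1)"] by (simp add: mon_def wt_def)

section \<open>The kernel of \<open>\<phi>\<close> is generated by three binomials\<close>

definition g1 :: "'k::comm_ring_1 ps3" where "g1 = var_W ^ 3 - var_Y * var_Z"
definition g2 :: "'k::comm_ring_1 ps3" where "g2 = var_Y ^ 2 - var_W * var_Z"
definition g3 :: "'k::comm_ring_1 ps3" where "g3 = var_Z ^ 2 - var_W ^ 2 * var_Y"

lemma g1_mon: "g1 = mon (0, 0, 3) - mon (1, 1, 0)"
  and g2_mon: "g2 = mon (2, 0, 0) - mon (0, 1, 1)"
  and g3_mon: "g3 = mon (0, 2, 0) - mon (1, 0, 2)"
  by (simp_all add: g1_def g2_def g3_def mon_def mult.commute)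

definition homogeneous :: "nat \<Rightarrow> 'k::comm_ring_1 ps3 \<Rightarrow> bool" where
  "homogeneous d g \<longleftrightarrow> (\<forall>i j k. coeff3 g i j k \<noteq> 0 \<longrightarrow> wt (i, j, k) = d)"

lemma binomial_homogeneous:
  "wt m = d \<Longrightarrow> wt m' = d \<Longrightarrow> homogeneous d (mon m - mon m')"
  unfolding homogeneous_def by (auto simp: coeff3_mon split: if_splits)

lemma phi_binomial: "wt m = wt m' \<Longrightarrow> phi (mon m - mon m') = 0"
  by (simp add: ring_hom_diff[OF phi_ring_hom] phi_mon)

lemma homogeneous_generators: "homogeneous 9 g1" "homogeneous 8 g2" "homogeneous 10 g3"
  unfolding g1_mon g2_mon g3_mon by (simp_all add: binomial_homogeneous wt_def)

lemma phi_generators: "phi g1 = 0" "phi g2 = 0" "phi g3 = 0"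
  unfolding g1_mon g2_mon g3_mon by (simp_all add: phi_binomial wt_def)

definition gen_comb :: "'k::comm_ring_1 ps3 \<Rightarrow> bool" where
  "gen_comb f \<longleftrightarrow> (\<exists>q1 q2 q3. f = q1 * g1 + q2 * g2 + q3 * g3)"

lemma gen_comb_add:
  assumes "gen_comb f" "gen_comb g"
  shows "gen_comb (f + g)"
proof -
  obtain p1 p2 p3 q1 q2 q3 where "f = p1 * g1 + p2 * g2 + p3 * g3" "g = q1 * g1 + q2 * g2 + q3 * g3"
    using assms unfolding gen_comb_def by blast
  then have "f + g = (p1 + q1) * g1 + (p2 + q2) * g2 + (p3 + q3) * g3" by (simp add: algebra_simps)
  then show ?thesis unfolding gen_comb_def by blast
qed

lemma gen_comb_multiples: "gen_comb (r * g1)" "gen_comb (r * g2)" "gen_comb (r * g3)"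
proof -
  have "r * g1 = r * g1 + 0 * g2 + 0 * g3" "r * g2 = 0 * g1 + r * g2 + 0 * g3"
    "r * g3 = 0 * g1 + 0 * g2 + r * g3" by simp_all
  then show "gen_comb (r * g1)" "gen_comb (r * g2)" "gen_comb (r * g3)"
    unfolding gen_comb_def by metis+
qed

lemma gen_comb_in_ideal_gen:
  assumes "gen_comb f"
  shows "f \<in> ideal_gen {g1, g2, g3}"
proof -
  let ?I = "ideal_gen {g1, g2, g3}"
  obtain q1 q2 q3 where f: "f = q1 * g1 + q2 * g2 + q3 * g3" using assms unfolding gen_comb_def by blast
  have "g1 \<in> ?I" "g2 \<in> ?I" "g3 \<in> ?I" by (simp_all add: subsetD[OF ideal_gen_superset])
  then show ?thesis unfolding f by (intro ideal_add ideal_gen_is_ideal ideal_mult_left)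
qed

lemma rewrite_YY: "mon (a + 2, b, c) - mon (a, b + 1, c + 1) = mon (a, b, c) * (g2 :: 'k::comm_ring_1 ps3)"
  and rewrite_YZ: "mon (a + 1, b + 1, c) - mon (a, b, c + 3) = - mon (a, b, c) * (g1 :: 'k ps3)"
  and rewrite_ZZ: "mon (a, b + 2, c) - mon (a + 1, b, c + 2) = mon (a, b, c) * (g3 :: 'k ps3)"
  by (simp_all add: g1_mon g2_mon g3_mon algebra_simps mon_mult)

text \<open>Normal forms: every weight \<open>n \<noteq> 1, 2\<close> is carried by exactly one monomial
  \<open>W^k\<close>, \<open>YW^k\<close> or \<open>ZW^k\<close>.\<close>
definition std_mon :: "nat \<Rightarrow> exps" where
  "std_mon n = (if n mod 3 = 0 then (0, 0, n div 3)
                else if n mod 3 = 1 then (1, 0, (n - 4) div 3) else (0, 1, (n - 5) div 3))"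

lemma std_mon_wt: "a \<le> 1 \<Longrightarrow> b \<le> 1 \<Longrightarrow> \<not> (a = 1 \<and> b = 1) \<Longrightarrow> std_mon (wt (a, b, c)) = (a, b, c)"
  by (auto simp: std_mon_def wt_def le_Suc_eq)

lemma std_mon_in_slice: "n \<noteq> 1 \<Longrightarrow> n \<noteq> 2 \<Longrightarrow> std_mon n \<in> weight_slice n"
  unfolding std_mon_def weight_slice_def by auto presburger+

text \<open>Every monomial is congruent modulo \<open>(g1, g2, g3)\<close> to the normal monomial of its
  weight: induction on the \<open>Y,Z\<close>-degree, which each rewriting rule lowers.\<close>
lemma monomial_reduction: "gen_comb (mon m - mon (std_mon (wt m)) :: 'k::comm_ring_1 ps3)"
proof (induction m rule: measure_induct_rule[where f = "\<lambda>(a, b, c). a + b"])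
  case (less m)
  obtain a b c where m: "m = (a, b, c)" by (cases m)
  have step: "gen_comb (mon m - mon (std_mon (wt m)) :: 'k ps3)"
    if "gen_comb (mon m - mon m' :: 'k ps3)" "wt m' = wt m"
      "(\<lambda>(a, b, c). a + b) m' < (\<lambda>(a, b, c). a + b) m" for m'
    using gen_comb_add[OF that(1) less[OF that(3)]] that(2) by simp
  consider "a \<ge> 2" | "a \<ge> 1" "b \<ge> 1" | "b \<ge> 2" | "a \<le> 1" "b \<le> 1" "\<not> (a = 1 \<and> b = 1)"
    by linarith
  then show ?case
  proof cases
    case 1
    then obtain a' where a: "a = 2 + a'" using le_Suc_ex by blast
    have "mon m - mon (a', b + 1, c + 1) = mon (a', b, c) * (g2 :: 'k ps3)"
      using rewrite_YY[of a' b c] by (simp add: m a)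
    then show ?thesis
      by (intro step[of "(a', b + 1, c + 1)"]) (use gen_comb_multiples in \<open>auto simp: m a wt_def\<close>)
  next
    case 2
    then obtain a' b' where a: "a = 1 + a'" and b: "b = 1 + b'" using le_Suc_ex by blast
    have "mon m - mon (a', b', c + 3) = - mon (a', b', c) * (g1 :: 'k ps3)"
      using rewrite_YZ[of a' b' c] by (simp add: m a b)
    then show ?thesis
      by (intro step[of "(a', b', c + 3)"]) (use gen_comb_multiples(1)[of "- mon (a', b', c)"] in \<open>auto simp: m a b wt_def\<close>)
  next
    case 3
    then obtain b' where b: "b = 2 + b'" using le_Suc_ex by blast
    have "mon m - mon (a + 1, b', c + 2) = mon (a, b', c) * (g3 :: 'k ps3)"
      using rewrite_ZZ[of a b' c] by (simp add: m b)
    then show ?thesis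
      by (intro step[of "(a + 1, b', c + 2)"]) (use gen_comb_multiples in \<open>auto simp: m b wt_def\<close>)
  next
    case 4
    then show ?thesis using gen_comb_multiples(1)[of 0] by (simp add: m std_mon_wt)
  qed
qed

text \<open>Gluing infinitely many cofactors: for a family \<open>Q\<close> indexed by exponents,
  \<open>glue f Q d\<close> plays the role of \<open>\<Sum>\<^sub>m f\<^sub>m Q\<^sub>m\<close>, keeping from each \<open>Q\<^sub>m\<close> only the part of
  weight \<open>wt m - d\<close>. After multiplication with a form of weight \<open>d\<close> this is exact.\<close>
definition glue :: "'k::comm_ring_1 ps3 \<Rightarrow> (exps \<Rightarrow> 'k ps3) \<Rightarrow> nat \<Rightarrow> 'k ps3" where
  "glue f Q d = mk3 (\<lambda>a b c. \<Sum>m\<in>weight_slice (wt (a, b, c) + d). coeff_at f m * coeff3 (Q m) a b c)"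

lemma coeff3_glue_mult:
  assumes hom: "homogeneous d g"
  shows "coeff3 (glue f Q d * g) x y z = (\<Sum>m\<in>weight_slice (wt (x, y, z)). coeff_at f m * coeff3 (Q m * g) x y z)"
proof -
  let ?n = "wt (x, y, z)"
  let ?t = "\<lambda>m i j k. coeff_at f m * (coeff3 (Q m) i j k * coeff3 g (x - i) (y - j) (z - k))"
  have "coeff3 (glue f Q d * g) x y z = (\<Sum>(i, j, k)\<in>box3 x y z.
      (\<Sum>m\<in>weight_slice (wt (i, j, k) + d). coeff_at f m * coeff3 (Q m) i j k) * coeff3 g (x - i) (y - j) (z - k))"
    unfolding glue_def coeff3_mult by simp
  also have "\<dots> = (\<Sum>(i, j, k)\<in>box3 x y z. \<Sum>m\<in>weight_slice ?n. ?t m i j k)"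
  proof (rule sum.cong[OF refl], clarify)
    fix i j k assume ijk: "(i, j, k) \<in> box3 x y z"
    show "(\<Sum>m\<in>weight_slice (wt (i, j, k) + d). coeff_at f m * coeff3 (Q m) i j k) * coeff3 g (x - i) (y - j) (z - k)
        = (\<Sum>m\<in>weight_slice ?n. ?t m i j k)"
    proof (cases "coeff3 g (x - i) (y - j) (z - k) = 0")
      case False
      with hom have "wt (x - i, y - j, z - k) = d" unfolding homogeneous_def by blast
      with ijk have "wt (i, j, k) + d = ?n" by (auto simp: wt_def box3_def)
      then show ?thesis by (simp add: sum_distrib_right mult.assoc)
    qed simp
  qed
  also have "\<dots> = (\<Sum>m\<in>weight_slice ?n. \<Sum>(i, j, k)\<in>box3 x y z. ?t m i j k)"
    by (simp only: split_def, rule sum.swap)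
  also have "\<dots> = (\<Sum>m\<in>weight_slice ?n. coeff_at f m * coeff3 (Q m * g) x y z)"
    unfolding coeff3_mult by (simp add: sum_distrib_left case_prod_beta)
  finally show ?thesis .
qed

text \<open>Expanding \<open>f\<close> over the monomials of one weight slice: apart from the coefficient of
  \<open>\<phi>(f)\<close>, the coefficients of \<open>f\<close> are recovered from the reductions \<open>Y^a Z^b W^c \<rightarrow> std_mon\<close>.\<close>
lemma slice_expansion:
  fixes f :: "'k::comm_ring_1 ps3"
  assumes n: "wt (x, y, z) = n"
  shows "(\<Sum>m\<in>weight_slice n. coeff_at f m * coeff3 (mon m - mon (std_mon n)) x y z)
       = coeff3 f x y z - phi f $ n * (if std_mon n = (x, y, z) then 1 else 0)"
proof -
  have xyz: "(x, y, z) \<in> weight_slice n" by (simp add: mem_weight_slice n)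
  have "(\<Sum>m\<in>weight_slice n. coeff_at f m * coeff3 (mon m - mon (std_mon n)) x y z)
      = (\<Sum>m\<in>weight_slice n. coeff_at f m * (if m = (x, y, z) then 1 else 0))
        - (\<Sum>m\<in>weight_slice n. coeff_at f m) * (if std_mon n = (x, y, z) then 1 else 0)"
    by (simp add: coeff3_mon right_diff_distrib sum_subtractf sum_distrib_right)
  also have "(\<Sum>m\<in>weight_slice n. coeff_at f m * (if m = (x, y, z) then 1 else 0)) = coeff3 f x y z"
  proof -
    have "(\<Sum>m\<in>weight_slice n. coeff_at f m * (if m = (x, y, z) then 1 else 0))
        = (\<Sum>m\<in>weight_slice n. if m = (x, y, z) then coeff_at f m else 0)"
      by (rule sum.cong) auto
    then show ?thesis using xyz by (simp add: coeff_at_def)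
  qed
  also have "(\<Sum>m\<in>weight_slice n. coeff_at f m) = phi f $ n" by (simp add: phi_nth)
  finally show ?thesis .
qed

text \<open>Hence \<open>f \<in> ker \<phi>\<close> is the glued combination of the reductions of its monomials.\<close>
lemma kernel_gen_comb:
  fixes f :: "'k::comm_ring_1 ps3"
  assumes "phi f = 0"
  shows "gen_comb f"
proof -
  obtain q1 q2 q3 where q: "\<And>m. mon m - mon (std_mon (wt m)) = q1 m * g1 + q2 m * g2 + (q3 m * g3 :: 'k ps3)"
    using monomial_reduction unfolding gen_comb_def by metis
  let ?A = "glue f q1 9 * g1 + glue f q2 8 * g2 + glue f q3 10 * g3"
  have "f = ?A"
  proof (rule coeff3_ext)
    fix x y z
    let ?n = "wt (x, y, z)"
    have "coeff3 ?A x y z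
        = (\<Sum>m\<in>weight_slice ?n. coeff_at f m * coeff3 (q1 m * g1 + q2 m * g2 + q3 m * g3) x y z)"
      by (simp add: coeff3_glue_mult homogeneous_generators sum.distrib distrib_left)
    also have "\<dots> = (\<Sum>m\<in>weight_slice ?n. coeff_at f m * coeff3 (mon m - mon (std_mon ?n)) x y z)"
      by (rule sum.cong[OF refl]) (simp add: mem_weight_slice flip: q)
    also have "\<dots> = coeff3 f x y z" using slice_expansion[where f = f, OF refl] by (simp add: assms)
    finally show "coeff3 f x y z = coeff3 ?A x y z" by simp
  qed
  then show ?thesis unfolding gen_comb_def by blast
qed

theorem kernel_eq_ideal_gen: "{f :: 'k::comm_ring_1 ps3. phi f = 0} = ideal_gen {g1, g2, g3}"
proof
  show "{f :: 'k ps3. phi f = 0} \<subseteq> ideal_gen {g1, g2, g3}"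
    using kernel_gen_comb gen_comb_in_ideal_gen by blast
  show "ideal_gen {g1, g2, g3} \<subseteq> {f :: 'k ps3. phi f = 0}"
    by (rule ideal_gen_least[OF kernel_is_ideal[OF phi_ring_hom]]) (simp add: phi_generators)
qed

section \<open>\<open>P\<close> is a G-ideal\<close>

text \<open>The image of \<open>\<phi>\<close> is the semigroup ring \<open>K[[T\<^sup>3, T\<^sup>4, T\<^sup>5]]\<close>: every series without
  \<open>T\<close>- and \<open>T\<^sup>2\<close>-terms is hit, already by a combination of normal monomials.\<close>
lemma phi_onto_semigroup_series:
  fixes s :: "'k::comm_ring_1 fps"
  assumes "s $ 1 = 0" "s $ 2 = 0"
  shows "\<exists>r. phi r = s"
proof
  define r :: "'k ps3" where
    "r = mk3 (\<lambda>a b c. if (a, b, c) = std_mon (wt (a, b, c)) then s $ wt (a, b, c) else 0)"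
  show "phi r = s"
  proof (rule fps_ext)
    fix n
    have "phi r $ n = (\<Sum>m\<in>weight_slice n. if m = std_mon n then s $ n else 0)"
      unfolding phi_nth by (rule sum.cong) (auto simp: r_def coeff_at_def mem_weight_slice)
    also have "\<dots> = (if std_mon n \<in> weight_slice n then s $ n else 0)"
      by (simp add: sum.delta')
    also have "\<dots> = s $ n"
      using assms std_mon_in_slice[of n] by (cases "n = 1 \<or> n = 2") auto
    finally show "phi r $ n = s $ n" .
  qed
qed

lemma quotient_times_T3_power:
  fixes u w :: "'k::field fps"
  assumes "u \<noteq> 0"
  shows "\<exists>k s. s $ 1 = 0 \<and> s $ 2 = 0 \<and> w * fps_X ^ (3 * k) = s * u"
proof -
  define d where "d = subdegree u"
  define v where "v = fps_shift d u"
  have v0: "v $ 0 \<noteq> 0" using assms by (simp add: v_def d_def)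
  have u: "u = v * fps_X ^ d" unfolding v_def d_def by (simp add: fps_shift_times_fps_X_power)
  define k where "k = d + 1"
  define s where "s = fps_X ^ (3 * k - d) * (w * inverse v)"
  have e: "3 * k = (3 * k - d) + d" unfolding k_def by simp
  have "s * u = fps_X ^ (3 * k - d) * fps_X ^ d * w * (inverse v * v)"
    unfolding s_def u by (simp add: algebra_simps)
  also have "\<dots> = w * fps_X ^ (3 * k)" using v0 e
    by (simp add: inverse_mult_eq_1 inverse_mult_eq_1' power_add[symmetric] mult.commute)
  finally have "w * fps_X ^ (3 * k) = s * u" by simp
  moreover have "s $ 1 = 0" "s $ 2 = 0" unfolding s_def fps_X_power_mult_nth k_def by auto
  ultimately show ?thesis by blast
qed

theorem kernel_G_ideal: "G_ideal {f :: 'k::field ps3. phi f = 0}"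
proof (rule G_ideal_by_one_denominator)
  show "prime_ideal {f :: 'k ps3. phi f = 0}" by (rule kernel_prime_ideal[OF phi_ring_hom])
  show "var_W \<notin> {f :: 'k ps3. phi f = 0}" by (simp add: phi_W)
  fix a b :: "'k ps3"
  assume "b \<notin> {f. phi f = 0}"
  then obtain k s where s: "s $ 1 = 0" "s $ 2 = 0" "phi a * fps_X ^ (3 * k) = s * phi b"
    using quotient_times_T3_power[of "phi b" "phi a"] by auto
  obtain r where "phi r = s" using phi_onto_semigroup_series[OF s(1,2)] by blast
  then have "a * var_W ^ k - r * b \<in> {f. phi f = 0}"
    using s(3) by (simp add: ring_hom_diff[OF phi_ring_hom] ring_hom_power[OF phi_ring_hom] phi_mult phi_W power_mult)
  then show "\<exists>r k. a * var_W ^ k - r * b \<in> {f. phi f = 0}" by blast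
qed

section \<open>The order filtration and an element of \<open>P\<close> outside \<open>P\<^sup>2\<close>\<close>

definition ord_ge :: "nat \<Rightarrow> 'k::comm_ring_1 ps3 set" where
  "ord_ge n = {g. \<forall>a b c. a + b + c < n \<longrightarrow> coeff3 g a b c = 0}"

lemma ord_ge_mult:
  assumes g: "g \<in> ord_ge i" and h: "h \<in> ord_ge j"
  shows "g * h \<in> ord_ge (i + j)"
  unfolding ord_ge_def
proof (intro CollectI allI impI)
  fix a b c assume abc: "a + b + c < i + j"
  show "coeff3 (g * h) a b c = 0"
    unfolding coeff3_mult
  proof (rule sum.neutral, clarify)
    fix x y z assume "(x, y, z) \<in> box3 a b c"
    then have "x + y + z < i \<or> (a - x) + (b - y) + (c - z) < j" using abc by (auto simp: box3_def)
    then show "coeff3 g x y z * coeff3 h (a - x) (b - y) (c - z) = 0"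
      using g h unfolding ord_ge_def by auto
  qed
qed

lemma ord_ge_0: "ord_ge 0 = UNIV"
  by (simp add: ord_ge_def)

lemma ord_ge_ideal: "is_ideal (ord_ge n)"
  unfolding is_ideal_def
proof (intro conjI ballI allI)
  show "0 \<in> ord_ge n" by (simp add: ord_ge_def)
  show "x + y \<in> ord_ge n" if "x \<in> ord_ge n" "y \<in> ord_ge n" for x y using that by (simp add: ord_ge_def)
  show "r * x \<in> ord_ge n" if "x \<in> ord_ge n" for r x
    using ord_ge_mult[of r 0 x n] that by (simp add: ord_ge_0)
qed

lemma ideal_pow_ord_ge: "I \<subseteq> ord_ge k \<Longrightarrow> ideal_pow I n \<subseteq> ord_ge (k * n)"
proof (induction n)
  case (Suc n)
  have "ideal_mult I (ideal_pow I n) \<subseteq> ord_ge (k + k * n)"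
    unfolding ideal_mult_def using Suc by (intro ideal_gen_least[OF ord_ge_ideal]) (auto intro: ord_ge_mult)
  then show ?case by simp
qed (simp add: ord_ge_0)

text \<open>The four exponents of total degree \<open>\<le> 1\<close> are alone in their weight slices, so the
  kernel of \<open>\<phi>\<close> has no constant or linear terms.\<close>
lemma weight_slice_linear: "a + b + c \<le> 1 \<Longrightarrow> weight_slice (wt (a, b, c)) = {(a, b, c)}"
proof -
  assume "a + b + c \<le> 1"
  then consider "(a, b, c) = (0, 0, 0)" | "(a, b, c) = (1, 0, 0)" | "(a, b, c) = (0, 1, 0)" | "(a, b, c) = (0, 0, 1)"
    by (auto simp: le_Suc_eq add_is_1)
  then show ?thesis
    by cases (auto simp: weight_slice_def wt_def, arith+)
qed

lemma kernel_ord_ge_2: "{f :: 'k::comm_ring_1 ps3. phi f = 0} \<subseteq> ord_ge 2"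
proof (clarsimp simp: ord_ge_def)
  fix f :: "'k ps3" and a b c :: nat
  assume "phi f = 0" "a + b + c < 2"
  then have "phi f $ wt (a, b, c) = 0" "weight_slice (wt (a, b, c)) = {(a, b, c)}"
    using weight_slice_linear[of a b c] by simp_all
  then show "coeff3 f a b c = 0" by (simp add: phi_nth coeff_at_def)
qed

text \<open>\<open>h = W\<^sup>5 - 3YZW\<^sup>2 + Y\<^sup>3W + Z\<^sup>3\<close> satisfies \<open>W h = g1\<^sup>2 - g2 g3 \<in> P\<^sup>2\<close> but has
  order \<open>3\<close>, so \<open>h \<notin> P\<^sup>2\<close>.\<close>
definition sq_witness :: "'k::comm_ring_1 ps3" where
  "sq_witness = var_W ^ 5 - 3 * var_Y * var_Z * var_W ^ 2 + var_Y ^ 3 * var_W + var_Z ^ 3"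

lemma W_times_sq_witness: "var_W * sq_witness = g1 * g1 - g2 * (g3 :: 'k::comm_ring_1 ps3)"
  unfolding sq_witness_def g1_def g2_def g3_def by (simp add: algebra_simps eval_nat_numeral)

lemma sq_witness_not_ord_ge_4: "(sq_witness :: 'k::comm_ring_1 ps3) \<notin> ord_ge 4"
proof -
  have mon_form: "(sq_witness :: 'k ps3) = mon (0, 0, 5) - 3 * mon (1, 1, 2) + mon (3, 0, 1) + mon (0, 3, 0)"
    by (simp add: sq_witness_def mon_def algebra_simps)
  have "coeff3 (sq_witness :: 'k ps3) 0 3 0 = 1"
    unfolding mon_form by (simp add: coeff3_mon coeff3_numeral_mult)
  then show ?thesis unfolding ord_ge_def by force
qed

lemma kernel_square_subset: "ideal_pow {f :: 'k::comm_ring_1 ps3. phi f = 0} 2 \<subseteq> {f. phi f = 0}"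
  by (rule ideal_pow_subset[OF kernel_is_ideal[OF phi_ring_hom]]) simp

lemma sq_witness_facts:
  shows sq_witness_W_mem: "var_W * sq_witness \<in> ideal_pow {f :: 'k::field ps3. phi f = 0} 2"
    and sq_witness_not_mem: "sq_witness \<notin> ideal_pow {f :: 'k::field ps3. phi f = 0} 2"
    and sq_witness_mem: "sq_witness \<in> {f :: 'k::field ps3. phi f = 0}"
proof -
  let ?P = "{f :: 'k ps3. phi f = 0}"
  have g: "g1 \<in> ?P" "g2 \<in> ?P" "g3 \<in> ?P" by (simp_all add: phi_generators)
  show W: "var_W * sq_witness \<in> ideal_pow ?P 2"
    unfolding W_times_sq_witness
    using ideal_diff[OF is_ideal_ideal_pow ideal_pow_two_mem[OF g(1,1)] ideal_pow_two_mem[OF g(2,3)]] .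
  have "ideal_pow ?P 2 \<subseteq> ord_ge (2 * 2)" by (rule ideal_pow_ord_ge[OF kernel_ord_ge_2])
  then show "sq_witness \<notin> ideal_pow ?P 2" using sq_witness_not_ord_ge_4 by auto
  have "var_W * sq_witness \<in> ?P"
    using W kernel_square_subset by blast
  then have "var_W \<in> ?P \<or> sq_witness \<in> ?P"
    using kernel_prime_ideal[OF phi_ring_hom] unfolding prime_ideal_def by blast
  moreover have "var_W \<notin> ?P" by (simp add: phi_W)
  ultimately show "sq_witness \<in> ?P" by blast
qed

theorem kernel_square_not_primary: "\<not> P_primary {f :: 'k::field ps3. phi f = 0} (ideal_pow {f. phi f = 0} 2)"
proof -
  let ?P = "{f :: 'k ps3. phi f = 0}"
  have "var_W ^ n \<notin> ideal_pow ?P 2" for n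
  proof
    assume "var_W ^ n \<in> ideal_pow ?P 2"
    then have "var_W ^ n \<in> ?P" using kernel_square_subset by blast
    then show False by (simp add: ring_hom_power[OF phi_ring_hom] phi_W)
  qed
  then have "\<not> primary_ideal (ideal_pow ?P 2)"
    using not_primary_by_witness[OF _ sq_witness_not_mem] sq_witness_W_mem by (metis mult.commute)
  then show ?thesis unfolding P_primary_def by blast
qed

section \<open>A maximal ideal of \<open>R[X]\<close> over \<open>P\<close> which is not power stable\<close>

lemma ring_hom_sum: "is_ring_hom h \<Longrightarrow> h (sum f A) = (\<Sum>x\<in>A. h (f x))"
  by (induction A rule: infinite_finite_induct) (simp_all add: ring_hom_zero ring_hom_add)

lemma ring_hom_poly_eval:
  fixes h :: "'a::comm_ring_1 \<Rightarrow> 'b::comm_ring_1"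
  assumes h: "is_ring_hom h"
  shows "is_ring_hom (\<lambda>F. poly (map_poly h F) z)"
proof -
  have h0: "h 0 = 0" by (rule ring_hom_zero[OF h])
  have "map_poly h (F + G) = map_poly h F + map_poly h G" for F G
    by (rule poly_eqI) (simp add: coeff_map_poly h0 ring_hom_add[OF h])
  moreover have "map_poly h (F * G) = map_poly h F * map_poly h G" for F G
    by (rule poly_eqI) (simp add: coeff_map_poly h0 coeff_mult ring_hom_sum[OF h] ring_hom_mult[OF h])
  ultimately show ?thesis
    unfolding is_ring_hom_def by (simp add: ring_hom_one[OF h])
qed

lemma fps_to_fls_ring_hom: "is_ring_hom fps_to_fls"
  unfolding is_ring_hom_def by (simp add: fls_times_fps_to_fls)

definition psi :: "'k::field ps3 poly \<Rightarrow> 'k fls" where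
  "psi F = poly (map_poly (fps_to_fls \<circ> phi) F) (fls_X_intpow (-3))"

lemma psi_ring_hom: "is_ring_hom psi"
  unfolding psi_def by (intro ring_hom_poly_eval ring_hom_comp fps_to_fls_ring_hom phi_ring_hom)

lemma psi_monom: "psi (monom r k) = fps_to_fls (phi r) * fls_X_intpow (-3) ^ k"
  by (simp add: psi_def map_poly_monom poly_monom ring_hom_zero[OF phi_ring_hom])

lemma psi_const: "psi [:r:] = fps_to_fls (phi r)"
  using psi_monom[of r 0] by (simp add: monom_0)

text \<open>\<open>\<psi>\<close> is onto: write \<open>L = T^d B\<close> with \<open>B\<close> a power series; for \<open>k\<close> large, \<open>T^(3k+d) B\<close> has no
  \<open>T\<close>- and \<open>T\<^sup>2\<close>-terms, so it is \<open>\<phi>(r)\<close>, and then \<open>\<psi>(r X^k) = L\<close>.\<close>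
lemma psi_surj: "surj (psi :: 'k::field ps3 poly \<Rightarrow> 'k fls)"
  unfolding surj_def
proof
  fix L :: "'k fls"
  define d where "d = fls_subdegree L"
  define B where "B = fls_base_factor_to_fps L"
  define k where "k = nat (- d) + 1"
  define e where "e = nat (3 * int k + d)"
  have k1: "int k \<ge> 1" "int k \<ge> 1 - d" unfolding k_def by linarith+
  have ei: "int e = 3 * int k + d" unfolding e_def using k1 by linarith
  have e3: "e \<ge> 3" using ei k1 by linarith
  define s where "s = fps_X ^ e * B"
  have "s $ 1 = 0" "s $ 2 = 0" unfolding s_def fps_X_power_mult_nth using e3 by auto
  from phi_onto_semigroup_series[OF this] obtain r where r: "phi r = s" by blast
  have "psi (monom r k) = fps_to_fls (fps_X ^ e) * fps_to_fls B * fls_X_intpow (-3) ^ k"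
    unfolding psi_monom r s_def by (simp add: fls_times_fps_to_fls)
  also have "\<dots> = fls_X_intpow (int e) * fls_X_intpow (int k * -3) * fps_to_fls B"
    using fls_X_intpow_power[of "-3" k, where 'a='k]
    by (simp add: fps_to_fls_power fls_X_power_conv_shift_1 mult.commute mult.left_commute)
  also have "\<dots> = fls_X_intpow (int e + int k * -3) * fps_to_fls B"
    by (simp only: fls_X_intpow_times_fls_X_intpow)
  also have "int e + int k * -3 = d" using ei by simp
  also have "fls_X_intpow d * fps_to_fls B = L"
    unfolding fls_X_intpow_times_conv_shift d_def B_def
    by (rule fls_conv_base_factor_to_fps_shift_subdegree[symmetric])
  finally show "\<exists>F. L = psi F" by metis
qed

lemma contract_ker_psi: "contract {F. psi F = 0} = {f :: 'k::field ps3. phi f = 0}"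
  by (simp add: contract_def psi_const)

text \<open>\<open>h = h (1 - WX) + X (Wh)\<close> with \<open>h, 1 - WX\<close> in the kernel of \<open>\<psi>\<close> and \<open>Wh \<in> P\<^sup>2\<close>:
  so \<open>h\<close> lies in the contraction of the square of the kernel.\<close>
lemma sq_witness_in_contract: "sq_witness \<in> contract (ideal_pow {F. psi F = (0 :: 'k::field fls)} 2)"
proof -
  let ?M = "{F :: 'k ps3 poly. psi F = 0}"
  let ?M2 = "ideal_pow ?M 2"
  have hom: "is_ring_hom psi" by (rule psi_ring_hom)
  define E :: "'k ps3 poly" where "E = 1 - [:var_W:] * [:0, 1:]"
  have X: "psi [:0, 1:] = (fls_X_intpow (-3) :: 'k fls)"
    using psi_monom[of 1 1] by (simp add: monom_Suc one_pCons ring_hom_one[OF phi_ring_hom])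
  have "psi [:var_W:] = (fls_X_intpow 3 :: 'k fls)"
    by (simp add: psi_const phi_W fps_to_fls_power fls_X_power_conv_shift_1)
  then have "psi [:var_W:] * psi [:0, 1:] = (1 :: 'k fls)"
    using fls_X_intpow_times_fls_X_intpow[of 3 "-3", where 'a='k] X by simp
  then have E: "E \<in> ?M"
    unfolding E_def mem_Collect_eq ring_hom_diff[OF hom] ring_hom_mult[OF hom] ring_hom_one[OF hom] by simp
  have h: "[:sq_witness:] \<in> ?M" using sq_witness_mem by (simp add: psi_const)
  have g: "[:g:] \<in> ?M" if "phi g = 0" for g using that by (simp add: psi_const)
  have "[:g1:] * [:g1:] - [:g2:] * [:g3:] \<in> ?M2"
    using ideal_diff[OF is_ideal_ideal_pow ideal_pow_two_mem ideal_pow_two_mem] g phi_generators by blast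
  then have WM: "[:var_W * sq_witness:] \<in> ?M2"
    by (simp add: W_times_sq_witness mult.commute)
  have "[:sq_witness:] * E + [:0, 1:] * [:var_W * sq_witness:] \<in> ?M2"
    by (intro ideal_add[OF is_ideal_ideal_pow] ideal_pow_two_mem[OF h E] ideal_mult_left[OF is_ideal_ideal_pow WM])
  moreover have "[:sq_witness:] * E + [:0, 1:] * [:var_W * sq_witness:] = [:sq_witness:]"
    unfolding E_def by (simp add: algebra_simps)
  ultimately show ?thesis unfolding contract_def by simp
qed

theorem ker_psi_not_power_stable: "\<not> power_stable {F. psi F = (0 :: 'k::field fls)}"
  by (rule not_power_stable_by_square)
    (use sq_witness_in_contract sq_witness_not_mem in \<open>auto simp: contract_ker_psi\<close>)

theorem mainTheorem15:
  fixes P :: "'k::field ps3 set"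
  assumes "P = {f. phi f = 0}"
  shows "P = ideal_gen {var_W ^ 3 - var_Y * var_Z, var_Y ^ 2 - var_W * var_Z,
                        var_Z ^ 2 - var_W ^ 2 * var_Y}
       \<and> G_ideal P
       \<and> \<not> P_primary P (ideal_pow P 2)
       \<and> (\<exists>M :: 'k ps3 poly set. maximal_ideal M \<and> contract M = P \<and> \<not> power_stable M)"
proof (intro conjI)
  show "P = ideal_gen {var_W ^ 3 - var_Y * var_Z, var_Y ^ 2 - var_W * var_Z, var_Z ^ 2 - var_W ^ 2 * var_Y}"
    using kernel_eq_ideal_gen assms unfolding g1_def g2_def g3_def by simp
  show "G_ideal P" using kernel_G_ideal assms by simp
  show "\<not> P_primary P (ideal_pow P 2)" using kernel_square_not_primary assms by simp
  have "maximal_ideal {F. psi F = (0 :: 'k fls)}"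
    by (rule kernel_maximal_ideal[OF psi_ring_hom psi_surj])
  then show "\<exists>M :: 'k ps3 poly set. maximal_ideal M \<and> contract M = P \<and> \<not> power_stable M"
    using contract_ker_psi ker_psi_not_power_stable assms by blast
qed

end
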